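(* $\mathrm{1QFA}\nsubseteq\mathrm{1RFA}/n$, and thus $\mathrm{1RFA}/n\neq\mathrm{1QFA}/n$.
   Context: $\mathrm{1QFA}$ is the family of languages recognized with bounded error (error probability at most a constant below $1/2$) by one-way measure-many quantum finite automata (1qfa's). A 1rfa is a one-way deterministic finite automaton satisfying the reversibility condition (each state has at most one predecessor per tape symbol). For equal-length strings $x,y$, $\genfrac{[}{]}{0pt}{}{x}{y}$ is the two-track string with $x$ on the upper track and $y$ on the lower track. $\mathrm{1RFA}/n$ (resp. $\mathrm{1QFA}/n$) is the family of languages $L$ for which there exist a 1rfa (resp. bounded-error 1qfa) $M$, an advice alphabet $\Gamma$ and an advice function $h$ with $|h(n)|=n$ such that $M$ on $\genfrac{[}{]}{0pt}{}{x}{h(|x|)}$ outputs $L(x)$ (with probability at least $1-\varepsilon$, $\varepsilon\in[0,1/2)$, in the 1qfa case). (The witness language is $\{0^m1^n\mid m,n\in\mathbb{N}\}$.) *)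

theory Defs
  imports Complex_Main
begin

datatype 'c tsym = Cent | Sym 'c | Dollar

definition tape :: "'c list \<Rightarrow> 'c tsym list" where
  "tape w = Cent # map Sym w @ [Dollar]"

text \<open>Two-track string: upper track x, lower track the advice string y (same length).\<close>
definition track2 :: "'a list \<Rightarrow> 'g list \<Rightarrow> ('a \<times> 'g) list" where
  "track2 x y = zip x y"

record 'c rfa =
  rQ :: "nat set"
  rdelta :: "nat \<Rightarrow> 'c tsym \<Rightarrow> nat"
  rq0 :: nat
  rQacc :: "nat set"
  rQrej :: "nat set"

definition rfa_wf :: "'c rfa \<Rightarrow> bool" where
  "rfa_wf M \<longleftrightarrow> finite (rQ M) \<and> rq0 M \<in> rQ M \<and>
     rQacc M \<subseteq> rQ M \<and> rQrej M \<subseteq> rQ M \<and> rQacc M \<inter> rQrej M = {} \<and>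
     (\<forall>q \<in> rQ M. \<forall>s. rdelta M q s \<in> rQ M) \<and>
     \<comment> \<open>reversibility: each state has at most one predecessor per tape symbol\<close>
     (\<forall>s. inj_on (\<lambda>q. rdelta M q s) (rQ M))"

fun rfa_out :: "'c rfa \<Rightarrow> nat \<Rightarrow> 'c tsym list \<Rightarrow> bool option" where
  "rfa_out M q [] = (if q \<in> rQacc M then Some True else if q \<in> rQrej M then Some False else None)"
| "rfa_out M q (s # w) = (if q \<in> rQacc M then Some True else if q \<in> rQrej M then Some False
                          else rfa_out M (rdelta M q s) w)"

definition rfa_output :: "'c rfa \<Rightarrow> 'c list \<Rightarrow> bool option" where
  "rfa_output M w = rfa_out M (rq0 M) (tape w)"

text \<open>States are 0..<k; U s is the k x k transition matrix for tape symbol s.\<close>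
record 'c qfa =
  qdim :: nat
  qU :: "'c tsym \<Rightarrow> nat \<Rightarrow> nat \<Rightarrow> complex"
  qq0 :: nat
  qQacc :: "nat set"
  qQrej :: "nat set"

definition qfa_wf :: "'c qfa \<Rightarrow> bool" where
  "qfa_wf M \<longleftrightarrow> qq0 M < qdim M \<and> qQacc M \<subseteq> {..<qdim M} \<and> qQrej M \<subseteq> {..<qdim M} \<and>
     qQacc M \<inter> qQrej M = {} \<and>
     \<comment> \<open>each U s is unitary\<close>
     (\<forall>s. \<forall>i<qdim M. \<forall>j<qdim M.
        (\<Sum>l<qdim M. cnj (qU M s l i) * qU M s l j) = (if i = j then 1 else 0))"

definition qfa_apply :: "'c qfa \<Rightarrow> 'c tsym \<Rightarrow> (nat \<Rightarrow> complex) \<Rightarrow> (nat \<Rightarrow> complex)" where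
  "qfa_apply M s \<psi> = (\<lambda>i. if i < qdim M then (\<Sum>j<qdim M. qU M s i j * \<psi> j) else 0)"

definition qfa_proj_non :: "'c qfa \<Rightarrow> (nat \<Rightarrow> complex) \<Rightarrow> (nat \<Rightarrow> complex)" where
  "qfa_proj_non M \<psi> = (\<lambda>i. if i < qdim M \<and> i \<notin> qQacc M \<and> i \<notin> qQrej M then \<psi> i else 0)"

text \<open>Total probability of acceptance (resp. rejection) in the measure-many model:
  after each step a measurement w.r.t. accepting/rejecting/non-halting subspaces.\<close>
fun qfa_pacc :: "'c qfa \<Rightarrow> (nat \<Rightarrow> complex) \<Rightarrow> 'c tsym list \<Rightarrow> real" where
  "qfa_pacc M \<psi> [] = 0"
| "qfa_pacc M \<psi> (s # w) =
     (let \<phi> = qfa_apply M s \<psi> in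
       (\<Sum>q\<in>qQacc M. (cmod (\<phi> q))\<^sup>2) + qfa_pacc M (qfa_proj_non M \<phi>) w)"

fun qfa_prej :: "'c qfa \<Rightarrow> (nat \<Rightarrow> complex) \<Rightarrow> 'c tsym list \<Rightarrow> real" where
  "qfa_prej M \<psi> [] = 0"
| "qfa_prej M \<psi> (s # w) =
     (let \<phi> = qfa_apply M s \<psi> in
       (\<Sum>q\<in>qQrej M. (cmod (\<phi> q))\<^sup>2) + qfa_prej M (qfa_proj_non M \<phi>) w)"

definition qfa_init :: "'c qfa \<Rightarrow> nat \<Rightarrow> complex" where
  "qfa_init M = (\<lambda>i. if i = qq0 M then 1 else 0)"

definition qfa_accprob :: "'c qfa \<Rightarrow> 'c list \<Rightarrow> real" where
  "qfa_accprob M w = qfa_pacc M (qfa_init M) (tape w)"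

definition qfa_rejprob :: "'c qfa \<Rightarrow> 'c list \<Rightarrow> real" where
  "qfa_rejprob M w = qfa_prej M (qfa_init M) (tape w)"

definition qfa_outputs :: "'c qfa \<Rightarrow> 'c list \<Rightarrow> bool \<Rightarrow> real \<Rightarrow> bool" where
  "qfa_outputs M w b p \<longleftrightarrow> (if b then qfa_accprob M w \<ge> p else qfa_rejprob M w \<ge> p)"

definition in_1QFA :: "'a list set \<Rightarrow> bool" where
  "in_1QFA L \<longleftrightarrow> (\<exists>(M :: 'a qfa) \<epsilon>. qfa_wf M \<and> 0 \<le> \<epsilon> \<and> \<epsilon> < 1/2 \<and>
      (\<forall>x. qfa_outputs M x (x \<in> L) (1 - \<epsilon>)))"

definition advice :: "nat set \<Rightarrow> (nat \<Rightarrow> nat list) \<Rightarrow> bool" where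
  "advice \<Gamma> h \<longleftrightarrow> finite \<Gamma> \<and> (\<forall>n. length (h n) = n \<and> set (h n) \<subseteq> \<Gamma>)"

definition in_1RFA_n :: "'a list set \<Rightarrow> bool" where
  "in_1RFA_n L \<longleftrightarrow> (\<exists>(M :: ('a \<times> nat) rfa) \<Gamma> h. rfa_wf M \<and> advice \<Gamma> h \<and>
      (\<forall>x. rfa_output M (track2 x (h (length x))) = Some (x \<in> L)))"

definition in_1QFA_n :: "'a list set \<Rightarrow> bool" where
  "in_1QFA_n L \<longleftrightarrow> (\<exists>(M :: ('a \<times> nat) qfa) \<Gamma> h \<epsilon>. qfa_wf M \<and> advice \<Gamma> h \<and>
      0 \<le> \<epsilon> \<and> \<epsilon> < 1/2 \<and>
      (\<forall>x. qfa_outputs M (track2 x (h (length x))) (x \<in> L) (1 - \<epsilon>)))"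

end

theory Submission
  imports Defs
begin

(*
  Witness: L = 0*1*, i.e. the sorted lists over bool with False < True.

  L is in 1QFA: a five-state measure-many automaton rotates its initial state to v = (3/5, 4/5)
  on the left endmarker. Each 0 projects onto v and rejects the orthogonal component, so v is
  fixed while the input reads 0s; the first 1 rejects the amplitude 3/5 of the first basis
  vector, leaving (0, 4/5), which further 1s keep, whereas a 0 after a 1 rejects 9/25 of the
  remaining weight 16/25. The right endmarker accepts what is left. Hence words in L are
  accepted with probability at least 16/25 and other words rejected with probability at least
  9/25 + 144/625 = 369/625. Ignoring the advice track shows L is in 1QFA/n as well.

  L is not in 1RFA/n: fix the advice for length n = |Q| + 2. If the states reached after the
  |Q| + 1 prefixes 0^i 1^(|Q|-i) were not all distinct, say equal for i < j, then running the
  common tail 1^(|Q|-j) backwards (reversibility) identifies the states after 0^i 1^(j-i) and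
  0^j. Both prefixes still admit accepted and rejected completions, so the automaton has not
  halted on them, yet the suffix 0 1^(n-j-1) separates them.
*)

(* Unlike rfa_out, this ignores the halting states. *)
fun rfa_run :: "'c rfa \<Rightarrow> nat \<Rightarrow> 'c tsym list \<Rightarrow> nat" where
  "rfa_run M q [] = q"
| "rfa_run M q (s # w) = rfa_run M (rdelta M q s) w"

lemma rfa_run_append: "rfa_run M q (u @ v) = rfa_run M (rfa_run M q u) v"
  by (induction u arbitrary: q) simp_all

lemma rfa_run_in_states: "rfa_wf M \<Longrightarrow> q \<in> rQ M \<Longrightarrow> rfa_run M q w \<in> rQ M"
  by (induction w arbitrary: q) (auto simp: rfa_wf_def)

lemma rfa_run_inj:
  assumes "rfa_wf M" "q \<in> rQ M" "q' \<in> rQ M" "rfa_run M q w = rfa_run M q' w"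
  shows "q = q'"
  using assms
proof (induction w arbitrary: q q')
  case (Cons s w)
  then have "rdelta M q s = rdelta M q' s" by (auto simp: rfa_wf_def)
  with Cons.prems show ?case by (auto simp: rfa_wf_def dest: inj_onD)
qed simp

lemma rfa_out_append_undecided:
  "rfa_out M q (p @ v1) \<noteq> rfa_out M q (p @ v2) \<Longrightarrow> rfa_out M q (p @ v) = rfa_out M (rfa_run M q p) v"
proof (induction p arbitrary: q)
  case (Cons s p)
  then show ?case by (simp split: if_split_asm)
qed simp

(* zip truncates, so the advice string for the whole input can be passed. *)
definition advised_prefix :: "nat list \<Rightarrow> 'a list \<Rightarrow> ('a \<times> nat) tsym list" where
  "advised_prefix a u = Cent # map Sym (zip u a)"

definition advised_suffix :: "nat list \<Rightarrow> nat \<Rightarrow> 'a list \<Rightarrow> ('a \<times> nat) tsym list" where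
  "advised_suffix a j v = map Sym (zip v (drop j a)) @ [Dollar]"

lemma zip_take_length: "zip xs (take (length xs) ys) = zip xs ys"
  by (induction xs arbitrary: ys) (auto simp: zip_Cons1 split: list.splits)

lemma advised_prefix_append:
  "advised_prefix a (u @ w) = advised_prefix a u @ map Sym (zip w (drop (length u) a))"
  by (simp add: advised_prefix_def zip_append1 zip_take_length)

lemma tape_track2_append:
  "tape (track2 (u @ v) a) = advised_prefix a u @ advised_suffix a (length u) v"
  by (simp add: tape_def track2_def advised_prefix_def advised_suffix_def zip_append1
      zip_take_length)

definition undetermined :: "'a list set \<Rightarrow> nat \<Rightarrow> 'a list \<Rightarrow> bool" where
  "undetermined L n u \<longleftrightarrow>
     (\<exists>v. length (u @ v) = n \<and> u @ v \<in> L) \<and> (\<exists>v. length (u @ v) = n \<and> u @ v \<notin> L)"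

lemma advised_rfa_residual:
  assumes rec: "\<And>x. rfa_output M (track2 x (h (length x))) = Some (x \<in> L)"
    and und: "undetermined L n u" and len: "length (u @ v) = n"
  shows "rfa_out M (rfa_run M (rq0 M) (advised_prefix (h n) u)) (advised_suffix (h n) (length u) v)
           = Some (u @ v \<in> L)"
proof -
  have out: "rfa_out M (rq0 M) (advised_prefix (h n) u @ advised_suffix (h n) (length u) v')
               = Some (u @ v' \<in> L)" if "length (u @ v') = n" for v'
    using rec[of "u @ v'"] that by (simp add: rfa_output_def tape_track2_append)
  from und obtain v1 v2 where "length (u @ v1) = n" "u @ v1 \<in> L" "length (u @ v2) = n" "u @ v2 \<notin> L"
    unfolding undetermined_def by blast
  then have "rfa_out M (rq0 M) (advised_prefix (h n) u @ advised_suffix (h n) (length u) v1)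
           \<noteq> rfa_out M (rq0 M) (advised_prefix (h n) u @ advised_suffix (h n) (length u) v2)"
    using out by simp
  then have "rfa_out M (rq0 M) (advised_prefix (h n) u @ advised_suffix (h n) (length u) v)
      = rfa_out M (rfa_run M (rq0 M) (advised_prefix (h n) u)) (advised_suffix (h n) (length u) v)"
    by (rule rfa_out_append_undecided)
  with out[OF len] show ?thesis by simp
qed

definition qfa_ignore_advice :: "'a qfa \<Rightarrow> ('a \<times> 'g) qfa" where
  "qfa_ignore_advice M =
     \<lparr>qdim = qdim M, qU = \<lambda>s. qU M (map_tsym fst s), qq0 = qq0 M, qQacc = qQacc M, qQrej = qQrej M\<rparr>"

lemma qfa_ignore_advice_simps [simp]:
  "qdim (qfa_ignore_advice M) = qdim M" "qU (qfa_ignore_advice M) s = qU M (map_tsym fst s)"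
  "qq0 (qfa_ignore_advice M) = qq0 M" "qQacc (qfa_ignore_advice M) = qQacc M"
  "qQrej (qfa_ignore_advice M) = qQrej M"
  by (simp_all add: qfa_ignore_advice_def)

lemma qfa_wf_ignore_advice: "qfa_wf M \<Longrightarrow> qfa_wf (qfa_ignore_advice M)"
  by (simp add: qfa_wf_def)

lemma qfa_apply_ignore_advice:
  "qfa_apply (qfa_ignore_advice M) s = qfa_apply M (map_tsym fst s)"
  by (simp add: qfa_apply_def fun_eq_iff)

lemma qfa_proj_non_ignore_advice: "qfa_proj_non (qfa_ignore_advice M) = qfa_proj_non M"
  by (simp add: qfa_proj_non_def fun_eq_iff)

lemma qfa_pacc_ignore_advice:
  "qfa_pacc (qfa_ignore_advice M) \<psi> w = qfa_pacc M \<psi> (map (map_tsym fst) w)"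
  by (induction w arbitrary: \<psi>)
    (simp_all add: qfa_apply_ignore_advice qfa_proj_non_ignore_advice Let_def)

lemma qfa_prej_ignore_advice:
  "qfa_prej (qfa_ignore_advice M) \<psi> w = qfa_prej M \<psi> (map (map_tsym fst) w)"
  by (induction w arbitrary: \<psi>)
    (simp_all add: qfa_apply_ignore_advice qfa_proj_non_ignore_advice Let_def)

lemma tape_track2_fst:
  assumes "length a = length x"
  shows "map (map_tsym fst) (tape (track2 x a)) = tape x"
proof -
  have "map (map_tsym fst \<circ> Sym) (zip x a) = map Sym (map fst (zip x a))"
    by simp
  with assms show ?thesis
    by (simp add: tape_def track2_def map_fst_zip)
qed

lemma qfa_outputs_ignore_advice:
  assumes "length a = length x"
  shows "qfa_outputs (qfa_ignore_advice M) (track2 x a) b p = qfa_outputs M x b p"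
  using tape_track2_fst[OF assms]
  by (simp add: qfa_outputs_def qfa_accprob_def qfa_rejprob_def qfa_init_def
      qfa_pacc_ignore_advice qfa_prej_ignore_advice)

lemma in_1QFA_imp_in_1QFA_n: "in_1QFA L \<Longrightarrow> in_1QFA_n L"
  unfolding in_1QFA_def in_1QFA_n_def
proof (elim exE conjE)
  fix M :: "'a qfa" and \<epsilon> :: real
  assume "qfa_wf M" "0 \<le> \<epsilon>" "\<epsilon> < 1/2" "\<forall>x. qfa_outputs M x (x \<in> L) (1 - \<epsilon>)"
  moreover have "advice {0} (\<lambda>n. replicate n 0)"
    by (auto simp: advice_def)
  ultimately show "\<exists>(M' :: ('a \<times> nat) qfa) \<Gamma> h \<epsilon>. qfa_wf M' \<and> advice \<Gamma> h \<and> 0 \<le> \<epsilon> \<and> \<epsilon> < 1/2 \<and>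
      (\<forall>x. qfa_outputs M' (track2 x (h (length x))) (x \<in> L) (1 - \<epsilon>))"
    by (intro exI[of _ "qfa_ignore_advice M"] exI[of _ "{0}"] exI[of _ "\<lambda>n. replicate n 0"] exI[of _ \<epsilon>])
      (simp add: qfa_wf_ignore_advice qfa_outputs_ignore_advice)
qed

lemma qfa_prej_nonneg: "0 \<le> qfa_prej M \<psi> w"
  by (induction w arbitrary: \<psi>) (simp_all add: Let_def sum_nonneg)

definition sorted_qfa_matrix :: "bool tsym \<Rightarrow> real list list" where
  "sorted_qfa_matrix s = (case s of
      Cent \<Rightarrow> [[3/5, -4/5, 0, 0, 0], [4/5, 3/5, 0, 0, 0], [0, 0, 1, 0, 0], [0, 0, 0, 1, 0], [0, 0, 0, 0, 1]]
    | Sym False \<Rightarrow>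
        [[9/25, 12/25, -4/5, 0, 0], [12/25, 16/25, 3/5, 0, 0], [4/5, -3/5, 0, 0, 0], [0, 0, 0, 1, 0],
         [0, 0, 0, 0, 1]]
    | Sym True \<Rightarrow> [[0, 0, 1, 0, 0], [0, 1, 0, 0, 0], [1, 0, 0, 0, 0], [0, 0, 0, 1, 0], [0, 0, 0, 0, 1]]
    | Dollar \<Rightarrow> [[0, 0, 0, 1, 0], [0, 0, 0, 0, 1], [0, 0, 1, 0, 0], [1, 0, 0, 0, 0], [0, 1, 0, 0, 0]])"

definition sorted_qfa :: "bool qfa" where
  "sorted_qfa = \<lparr>qdim = 5,
     qU = \<lambda>s i j. if i < 5 \<and> j < 5 then complex_of_real (sorted_qfa_matrix s ! i ! j) else 0,
     qq0 = 0, qQacc = {3, 4}, qQrej = {2}\<rparr>"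

lemma sum_lessThan_5: "(\<Sum>l<5::nat. f l) = f 0 + f 1 + f 2 + f 3 + (f 4 :: 'a::comm_monoid_add)"
  by (simp add: eval_nat_numeral lessThan_Suc add.commute add.left_commute)

lemma less_5_cases: "(i::nat) < 5 \<longleftrightarrow> i = 0 \<or> i = 1 \<or> i = 2 \<or> i = 3 \<or> i = 4"
  by auto

lemma sorted_qfa_wf: "qfa_wf sorted_qfa"
  unfolding qfa_wf_def sorted_qfa_def
  apply (simp add: sum_lessThan_5, intro allI)
  subgoal for s
    by (cases s) (auto simp: less_5_cases sorted_qfa_matrix_def split: bool.splits)
  done

definition vec01 :: "complex \<Rightarrow> complex \<Rightarrow> nat \<Rightarrow> complex" where
  "vec01 x y = (\<lambda>i. if i = 0 then x else if i = 1 then y else 0)"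

lemma sorted_qfa_apply_vec01:
  "qfa_apply sorted_qfa s (vec01 x y) =
     (\<lambda>i. if i < 5 then qU sorted_qfa s i 0 * x + qU sorted_qfa s i 1 * y else 0)"
  by (auto simp: qfa_apply_def sorted_qfa_def sum_lessThan_5 vec01_def)

lemma sorted_qfa_simps [simp]:
  "qdim sorted_qfa = 5" "qq0 sorted_qfa = 0" "qQacc sorted_qfa = {3, 4}" "qQrej sorted_qfa = {2}"
  by (simp_all add: sorted_qfa_def)

lemma sorted_qfa_proj_non_apply_vec01:
  "qfa_proj_non sorted_qfa (qfa_apply sorted_qfa s (vec01 x y)) =
     vec01 (qU sorted_qfa s 0 0 * x + qU sorted_qfa s 0 1 * y)
           (qU sorted_qfa s 1 0 * x + qU sorted_qfa s 1 1 * y)"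
  unfolding sorted_qfa_apply_vec01 by (auto simp: qfa_proj_non_def vec01_def)

lemma sorted_qfa_pacc_Cons:
  "qfa_pacc sorted_qfa (vec01 x y) (s # w) =
     (cmod (qU sorted_qfa s 3 0 * x + qU sorted_qfa s 3 1 * y))\<^sup>2
     + (cmod (qU sorted_qfa s 4 0 * x + qU sorted_qfa s 4 1 * y))\<^sup>2
     + qfa_pacc sorted_qfa (vec01 (qU sorted_qfa s 0 0 * x + qU sorted_qfa s 0 1 * y)
                                 (qU sorted_qfa s 1 0 * x + qU sorted_qfa s 1 1 * y)) w"
  by (simp add: Let_def sorted_qfa_proj_non_apply_vec01) (simp add: sorted_qfa_apply_vec01)

lemma sorted_qfa_prej_Cons:
  "qfa_prej sorted_qfa (vec01 x y) (s # w) =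
     (cmod (qU sorted_qfa s 2 0 * x + qU sorted_qfa s 2 1 * y))\<^sup>2
     + qfa_prej sorted_qfa (vec01 (qU sorted_qfa s 0 0 * x + qU sorted_qfa s 0 1 * y)
                                 (qU sorted_qfa s 1 0 * x + qU sorted_qfa s 1 1 * y)) w"
  by (simp add: Let_def sorted_qfa_proj_non_apply_vec01) (simp add: sorted_qfa_apply_vec01)

declare qfa_pacc.simps(2) [simp del] qfa_prej.simps(2) [simp del]

lemma sorted_qfa_False:
  "qfa_pacc sorted_qfa (vec01 x y) (Sym False # w) =
     qfa_pacc sorted_qfa (vec01 ((9 * x + 12 * y) / 25) ((12 * x + 16 * y) / 25)) w"
  "qfa_prej sorted_qfa (vec01 x y) (Sym False # w) =
     (cmod ((4 * x - 3 * y) / 5))\<^sup>2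
     + qfa_prej sorted_qfa (vec01 ((9 * x + 12 * y) / 25) ((12 * x + 16 * y) / 25)) w"
  by (simp_all only: sorted_qfa_pacc_Cons sorted_qfa_prej_Cons)
    (simp_all add: sorted_qfa_def sorted_qfa_matrix_def add_divide_distrib diff_divide_distrib)

lemma sorted_qfa_True:
  "qfa_pacc sorted_qfa (vec01 x y) (Sym True # w) = qfa_pacc sorted_qfa (vec01 0 y) w"
  "qfa_prej sorted_qfa (vec01 x y) (Sym True # w) = (cmod x)\<^sup>2 + qfa_prej sorted_qfa (vec01 0 y) w"
  by (simp_all only: sorted_qfa_pacc_Cons sorted_qfa_prej_Cons)
    (simp_all add: sorted_qfa_def sorted_qfa_matrix_def)

lemma sorted_qfa_Dollar:
  "qfa_pacc sorted_qfa (vec01 x y) [Dollar] = (cmod x)\<^sup>2 + (cmod y)\<^sup>2"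
  by (simp only: sorted_qfa_pacc_Cons) (simp add: sorted_qfa_def sorted_qfa_matrix_def)

lemma sorted_qfa_Cent:
  "qfa_accprob sorted_qfa w = qfa_pacc sorted_qfa (vec01 (3/5) (4/5)) (map Sym w @ [Dollar])"
  "qfa_rejprob sorted_qfa w = qfa_prej sorted_qfa (vec01 (3/5) (4/5)) (map Sym w @ [Dollar])"
proof -
  have init: "qfa_init sorted_qfa = vec01 1 0"
    by (simp add: qfa_init_def vec01_def fun_eq_iff)
  show "qfa_accprob sorted_qfa w = qfa_pacc sorted_qfa (vec01 (3/5) (4/5)) (map Sym w @ [Dollar])"
    unfolding qfa_accprob_def tape_def init sorted_qfa_pacc_Cons
    by (simp add: sorted_qfa_def sorted_qfa_matrix_def)
  show "qfa_rejprob sorted_qfa w = qfa_prej sorted_qfa (vec01 (3/5) (4/5)) (map Sym w @ [Dollar])"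
    unfolding qfa_rejprob_def tape_def init sorted_qfa_prej_Cons
    by (simp add: sorted_qfa_def sorted_qfa_matrix_def)
qed

lemma sorted_qfa_accepts_all_True:
  "(\<forall>b\<in>set w. b) \<Longrightarrow> qfa_pacc sorted_qfa (vec01 0 y) (map Sym w @ [Dollar]) = (cmod y)\<^sup>2"
  by (induction w) (auto simp: sorted_qfa_True sorted_qfa_Dollar)

lemma sorted_qfa_rejects_False:
  "False \<in> set w \<Longrightarrow> 9/25 * (cmod y)\<^sup>2 \<le> qfa_prej sorted_qfa (vec01 0 y) (map Sym w @ [Dollar])"
proof (induction w)
  case (Cons b w)
  show ?case
  proof (cases b)
    case True
    with Cons show ?thesis by (simp add: sorted_qfa_True)
  next
    case False
    then show ?thesis
      using qfa_prej_nonneg by (simp add: sorted_qfa_False norm_divide power_divide)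
  qed
qed simp

lemma sorted_qfa_accepts_sorted:
  "sorted w \<Longrightarrow> 16/25 \<le> qfa_pacc sorted_qfa (vec01 (3/5) (4/5)) (map Sym w @ [Dollar])"
proof (induction w)
  case Nil
  then show ?case by (simp add: sorted_qfa_Dollar power2_eq_square)
next
  case (Cons b w)
  show ?case
  proof (cases b)
    case True
    with Cons.prems have "\<forall>c\<in>set w. c"
      by auto
    then show ?thesis
      using True sorted_qfa_accepts_all_True[of w "4/5"] by (simp add: sorted_qfa_True power2_eq_square)
  next
    case False
    with Cons show ?thesis by (simp add: sorted_qfa_False)
  qed
qed

lemma sorted_qfa_rejects_unsorted:
  "\<not> sorted w \<Longrightarrow> 369/625 \<le> qfa_prej sorted_qfa (vec01 (3/5) (4/5)) (map Sym w @ [Dollar])"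
proof (induction w)
  case (Cons b w)
  show ?case
  proof (cases b)
    case True
    have "False \<in> set w"
    proof (rule ccontr)
      assume "False \<notin> set w"
      then have "\<forall>c\<in>set w. c"
        by (metis (full_types))
      with True have "sorted (b # w)"
        by (induction w) auto
      with Cons.prems show False ..
    qed
    then show ?thesis
      using True sorted_qfa_rejects_False[of w "4/5"] by (simp add: sorted_qfa_True power2_eq_square)
  next
    case False
    with Cons show ?thesis by (simp add: sorted_qfa_False)
  qed
qed simp

lemma sorted_in_1QFA: "in_1QFA {w :: bool list. sorted w}"
proof -
  have "qfa_outputs sorted_qfa w (w \<in> {w. sorted w}) (1 - 256/625)" for w
    using sorted_qfa_accepts_sorted[of w] sorted_qfa_rejects_unsorted[of w]
    by (cases "sorted w") (simp_all add: qfa_outputs_def sorted_qfa_Cent)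
  then show ?thesis
    unfolding in_1QFA_def using sorted_qfa_wf by (intro exI[of _ sorted_qfa] exI[of _ "256/625"]) simp
qed

lemma sorted_prefix_undetermined:
  assumes "sorted (u :: bool list)" "length u + 2 \<le> n"
  shows "undetermined {x. sorted x} n u"
  unfolding undetermined_def
proof
  show "\<exists>v. length (u @ v) = n \<and> u @ v \<in> {x. sorted x}"
    using assms by (intro exI[of _ "replicate (n - length u) True"]) (auto simp: sorted_append)
  have "\<not> sorted (u @ True # False # replicate (n - length u - 2) True)"
    by (simp add: sorted_append)
  then show "\<exists>v. length (u @ v) = n \<and> u @ v \<notin> {x. sorted x}"
    using assms by (intro exI[of _ "True # False # replicate (n - length u - 2) True"]) simp
qed

lemma sorted_not_in_1RFA_n: "\<not> in_1RFA_n {x :: bool list. sorted x}"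
proof
  assume "in_1RFA_n {x :: bool list. sorted x}"
  then obtain M :: "(bool \<times> nat) rfa" and \<Gamma> h where wf: "rfa_wf M"
    and rec: "\<And>x. rfa_output M (track2 x (h (length x))) = Some (x \<in> {x. sorted x})"
    unfolding in_1RFA_n_def by blast
  define Q where "Q = card (rQ M)"
  define n where "n = Q + 2"
  define state where "state u = rfa_run M (rq0 M) (advised_prefix (h n) u)" for u :: "bool list"
  have state_append: "state (u @ w) = rfa_run M (state u) (map Sym (zip w (drop (length u) (h n))))"
    for u w by (simp add: state_def advised_prefix_append rfa_run_append)
  have state_in: "state u \<in> rQ M" for u
    unfolding state_def using wf by (simp add: rfa_run_in_states rfa_wf_def)
  have residual: "rfa_out M (state u) (advised_suffix (h n) (length u) v) = Some (sorted (u @ v))"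
    if "sorted u" "length u \<le> Q" "length (u @ v) = n" for u v
    using advised_rfa_residual[OF rec sorted_prefix_undetermined] that
    by (simp add: state_def n_def)
  define S where "S i = state (replicate i False @ replicate (Q - i) True)" for i
  have "S i \<noteq> S j" if "i < j" "j \<le> Q" for i j
  proof
    assume S_eq: "S i = S j"
    define u1 where "u1 = replicate i False @ replicate (j - i) True"
    define u2 where "u2 = replicate j False"
    define W where "W = replicate (Q - j) True"
    define tail where "tail = map Sym (zip W (drop j (h n)))"
    have len: "length u1 = j" "length u2 = j"
      using that by (simp_all add: u1_def u2_def)
    have "S i = state (u1 @ W)"
      using that by (simp add: S_def u1_def W_def flip: replicate_add)
    also have "\<dots> = rfa_run M (state u1) tail"
      by (simp only: state_append len tail_def)
    finally have "S i = rfa_run M (state u1) tail" .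
    moreover have "S j = state (u2 @ W)"
      by (simp add: S_def u2_def W_def)
    moreover have "state (u2 @ W) = rfa_run M (state u2) tail"
      by (simp only: state_append len tail_def)
    ultimately have state_eq: "state u1 = state u2"
      using S_eq rfa_run_inj[OF wf state_in state_in] by metis
    define v where "v = False # replicate (Q + 1 - j) True"
    have "length (u1 @ v) = n" "length (u2 @ v) = n"
      using that len by (simp_all add: v_def n_def)
    moreover have "sorted u1" "sorted u2" "sorted (u2 @ v)"
      by (simp_all add: u1_def u2_def v_def sorted_append)
    moreover have "\<not> sorted (u1 @ v)"
      using that by (auto simp: u1_def v_def sorted_append)
    ultimately have "rfa_out M (state u1) (advised_suffix (h n) j v) = Some False"
      "rfa_out M (state u2) (advised_suffix (h n) j v) = Some True"
      using residual[of u1 v] residual[of u2 v] that len by simp_all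
    with state_eq show False by simp
  qed
  then have "inj_on S {0..Q}"
    by (metis atLeastAtMost_iff inj_onI linorder_neqE_nat)
  moreover have "S ` {0..Q} \<subseteq> rQ M"
    using state_in by (auto simp: S_def)
  moreover have "finite (rQ M)"
    using wf by (simp add: rfa_wf_def)
  ultimately have "card {0..Q} \<le> Q"
    unfolding Q_def by (rule card_inj_on_le)
  then show False by simp
qed

theorem corollary4p2:
  shows "(\<exists>L :: bool list set. in_1QFA L \<and> \<not> in_1RFA_n L) \<and>
         {L :: bool list set. in_1RFA_n L} \<noteq> {L. in_1QFA_n L}"
proof
  show "\<exists>L :: bool list set. in_1QFA L \<and> \<not> in_1RFA_n L"
    using sorted_in_1QFA sorted_not_in_1RFA_n by blast
  show "{L :: bool list set. in_1RFA_n L} \<noteq> {L. in_1QFA_n L}"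
    using in_1QFA_imp_in_1QFA_n[OF sorted_in_1QFA] sorted_not_in_1RFA_n by blast
qed

end
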